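(* Let $q$ be a prime power, $1\le t\le s$, and $M$ an invertible $s\times s$ matrix over $\mathbb{F}_q$. Then $\mathbf{y}=\mathbf{x}M^{-1}$ defines a linear $(t,t,s,q)$-AONT if and only if every $(s-t)\times(s-t)$ submatrix of $M^{-1}$ is invertible.
   Context: For a bijection $\phi:\Gamma^s\to\Gamma^s$ over an alphabet $\Gamma$ of size $v$, its array representation is the $v^s\times 2s$ array having, for each $\mathbf{x}\in\Gamma^s$, a row $(\mathbf{x},\phi(\mathbf{x}))$. An $N\times k$ array is unbiased with respect to a set $D$ of columns if the rows restricted to $D$ contain every $|D|$-tuple over $\Gamma$ exactly $N/v^{|D|}$ times. $\phi$ is a $(t,t,s,v)$-AONT if its array representation (columns labelled $1,\dots,2s$) is unbiased with respect to $\{1,\dots,s\}$, $\{s+1,\dots,2s\}$, and $I\cup J$ for every $I\subseteq\{1,\dots,s\}$ with $|I|=t$ and every $J\subseteq\{s+1,\dots,2s\}$ with $|J|=s-t$. The map $\mathbf{x}\mapsto\mathbf{x}M^{-1}$ on row vectors of $\mathbb{F}_q^s$ is a linear $(t,t,s,q)$-AONT if it is a $(t,t,s,q)$-AONT over $\Gamma=\mathbb{F}_q$. (By convention a $0\times 0$ matrix is invertible.) *)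

theory Defs
  imports "Jordan_Normal_Form.DL_Submatrix"
begin

definition words :: "nat \<Rightarrow> 'a vec set" where
  "words s = carrier_vec s"

text \<open>Row of the array representation of phi indexed by x; columns are
  numbered 0..2s-1 (column j+1 of the paper is column j here).\<close>
definition array_row :: "nat \<Rightarrow> ('a vec \<Rightarrow> 'a vec) \<Rightarrow> 'a vec \<Rightarrow> nat \<Rightarrow> 'a" where
  "array_row s phi x j = (if j < s then x $ j else phi x $ (j - s))"

text \<open>The array representation (with v^s rows, one per x) is unbiased w.r.t. D:
  every |D|-tuple (a function u on D) occurs exactly N / v^|D| times.\<close>
definition unbiased :: "nat \<Rightarrow> ('a::finite vec \<Rightarrow> 'a vec) \<Rightarrow> nat set \<Rightarrow> bool" where
  "unbiased s phi D \<longleftrightarrow>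
     (\<forall>u :: nat \<Rightarrow> 'a.
        real (card {x \<in> words s. \<forall>j\<in>D. array_row s phi x j = u j})
          = real (card (words s :: 'a vec set)) / real (card (UNIV :: 'a set)) ^ card D)"

definition AONT :: "nat \<Rightarrow> nat \<Rightarrow> ('a::finite vec \<Rightarrow> 'a vec) \<Rightarrow> bool" where
  "AONT t s phi \<longleftrightarrow>
     bij_betw phi (words s) (words s) \<and>
     unbiased s phi {0..<s} \<and> unbiased s phi {s..<2*s} \<and>
     (\<forall>I J. I \<subseteq> {0..<s} \<longrightarrow> card I = t \<longrightarrow> J \<subseteq> {s..<2*s} \<longrightarrow> card J = s - t
        \<longrightarrow> unbiased s phi (I \<union> J))"

definition vec_times_mat :: "'a::semiring_0 vec \<Rightarrow> 'a mat \<Rightarrow> 'a vec" where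
  "vec_times_mat x A = vec (dim_col A) (\<lambda>j. x \<bullet> col A j)"

end

theory Submission
  imports Defs "Jordan_Normal_Form.Determinant"
begin

text \<open>
  The map x \<mapsto> x M^-1 is linear, so its array is unbiased with respect to a set of s
  columns iff the restriction of the array rows to these columns is injective, i.e. iff no
  nonzero x vanishes on the t chosen input coordinates I and on the s - t chosen output
  coordinates J. Such an x is supported on the complement I' of I, and on J the product
  x M^-1 is the part of x on I' times the submatrix of M^-1 with rows I' and columns J.
  Hence unbiasedness for I \<union> J is exactly invertibility of that (s - t) \<times> (s - t) submatrix.
  The two remaining unbiasedness conditions are the cases of the empty submatrix and of M^-1.
\<close>

lemma card_carrier_vec: "card (carrier_vec n :: 'a::finite vec set) = card (UNIV :: 'a set) ^ n"
proof -
  have "bij_betw list_of_vec (carrier_vec n :: 'a vec set) {xs. length xs = n}"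
    by (rule bij_betw_byWitness[where f' = vec_of_list])
      (auto simp: vec_list list_vec intro!: carrier_vecI)
  then show ?thesis
    using card_lists_length_eq[of "UNIV :: 'a set" n] by (simp add: bij_betw_same_card)
qed

lemma card_fibers_eq_1_iff_inj_on:
  assumes "finite B" and "f ` A \<subseteq> B" and "card A = card B"
  shows "(\<forall>b\<in>B. card {x\<in>A. f x = b} = 1) \<longleftrightarrow> inj_on f A"
proof
  assume fibers: "\<forall>b\<in>B. card {x\<in>A. f x = b} = 1"
  show "inj_on f A"
  proof (rule inj_onI)
    fix x y assume "x \<in> A" "y \<in> A" "f x = f y"
    moreover have "card {z\<in>A. f z = f x} = 1" using fibers \<open>x \<in> A\<close> assms(2) by blast
    then obtain z where "{w\<in>A. f w = f x} = {z}" by (auto simp: card_1_singleton_iff)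
    ultimately show "x = y" by (metis (mono_tags, lifting) mem_Collect_eq singletonD)
  qed
next
  assume inj: "inj_on f A"
  then have "f ` A = B"
    using assms by (intro card_subset_eq) (auto simp: card_image)
  then show "\<forall>b\<in>B. card {x\<in>A. f x = b} = 1"
    using inj by (auto simp: card_1_singleton_iff inj_on_def)
qed

lemma all_restrict_iff: "(\<forall>u. P (restrict u D)) \<longleftrightarrow> (\<forall>u \<in> D \<rightarrow>\<^sub>E UNIV. P u)"
  by (metis PiE_restrict restrict_PiE_iff UNIV_I)

lemma unbiased_iff_inj_on:
  fixes phi :: "'a::finite vec \<Rightarrow> 'a vec"
  assumes "finite D" and "card D = s"
  shows "unbiased s phi D \<longleftrightarrow> inj_on (\<lambda>x. restrict (array_row s phi x) D) (words s)"
proof -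
  let ?F = "\<lambda>x. restrict (array_row s phi x) D"
  have card_words: "card (words s :: 'a vec set) = card (UNIV :: 'a set) ^ s"
    unfolding words_def by (rule card_carrier_vec)
  have "card (D \<rightarrow>\<^sub>E (UNIV :: 'a set)) = card (UNIV :: 'a set) ^ s"
    using assms by (simp add: card_PiE)
  then have fibers: "(\<forall>u \<in> D \<rightarrow>\<^sub>E UNIV. card {x \<in> words s. ?F x = u} = 1) \<longleftrightarrow> inj_on ?F (words s)"
    using card_words assms(1) by (intro card_fibers_eq_1_iff_inj_on) (auto simp: finite_PiE)
  have "{x \<in> words s. \<forall>j\<in>D. array_row s phi x j = u j} = {x \<in> words s. ?F x = restrict u D}" for u
    by (auto simp: fun_eq_iff restrict_def)
  then have "unbiased s phi D \<longleftrightarrow> (\<forall>u. card {x \<in> words s. ?F x = restrict u D} = 1)"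
    unfolding unbiased_def card_words using assms(2) by simp
  also have "\<dots> \<longleftrightarrow> (\<forall>u \<in> D \<rightarrow>\<^sub>E UNIV. card {x \<in> words s. ?F x = u} = 1)"
    using all_restrict_iff[of "\<lambda>u. card {x \<in> words s. ?F x = u} = 1" D] .
  finally show ?thesis using fibers by simp
qed

lemma vec_times_mat_carrier:
  "A \<in> carrier_mat n m \<Longrightarrow> vec_times_mat x A \<in> carrier_vec m"
  unfolding vec_times_mat_def by simp

lemma vec_times_mat_eq_transpose:
  fixes A :: "'a::comm_semiring_0 mat"
  assumes A: "A \<in> carrier_mat n m" and x: "x \<in> carrier_vec n"
  shows "vec_times_mat x A = transpose_mat A *\<^sub>v x"
proof (rule eq_vecI)
  fix j assume "j < dim_vec (transpose_mat A *\<^sub>v x)"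
  with A have j: "j < m" by simp
  have "x \<bullet> col A j = col A j \<bullet> x" by (rule comm_scalar_prod[OF x col_carrier_vec[OF j A]])
  then show "vec_times_mat x A $ j = (transpose_mat A *\<^sub>v x) $ j"
    using A j by (simp add: vec_times_mat_def row_transpose)
qed (use A in \<open>simp add: vec_times_mat_def\<close>)

lemma vec_times_mat_minus:
  fixes A :: "'a::comm_ring mat"
  assumes "A \<in> carrier_mat n m" and "x \<in> carrier_vec n" and "y \<in> carrier_vec n"
  shows "vec_times_mat (x - y) A = vec_times_mat x A - vec_times_mat y A"
  using assms
  by (simp add: vec_times_mat_eq_transpose[OF assms(1)] mult_minus_distrib_mat_vec[of _ m n])

lemma vec_times_mat_zero:
  fixes A :: "'a::comm_semiring_0 mat"
  assumes "A \<in> carrier_mat n m"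
  shows "vec_times_mat (0\<^sub>v n) A = 0\<^sub>v m"
proof (rule eq_vecI)
  fix j assume "j < dim_vec (0\<^sub>v m :: 'a vec)"
  then show "vec_times_mat (0\<^sub>v n) A $ j = 0\<^sub>v m $ j"
    using assms col_carrier_vec[of j m A n] by (simp add: vec_times_mat_def)
qed (use assms in \<open>simp add: vec_times_mat_def\<close>)

lemma vec_times_mat_one:
  fixes x :: "'a::comm_semiring_1 vec"
  assumes "x \<in> carrier_vec n"
  shows "vec_times_mat x (1\<^sub>m n) = x"
  using vec_times_mat_eq_transpose[OF one_carrier_mat assms] assms by simp

lemma vec_times_mat_mult:
  fixes A :: "'a::comm_semiring_0 mat"
  assumes A: "A \<in> carrier_mat n m" and B: "B \<in> carrier_mat m k" and x: "x \<in> carrier_vec n"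
  shows "vec_times_mat (vec_times_mat x A) B = vec_times_mat x (A * B)"
proof -
  have "vec_times_mat (vec_times_mat x A) B = transpose_mat B *\<^sub>v vec_times_mat x A"
    by (rule vec_times_mat_eq_transpose[OF B vec_times_mat_carrier[OF A]])
  also have "\<dots> = transpose_mat B *\<^sub>v (transpose_mat A *\<^sub>v x)"
    by (simp only: vec_times_mat_eq_transpose[OF A x])
  also have "\<dots> = transpose_mat (A * B) *\<^sub>v x"
    using A B x by (simp add: transpose_mult[OF A B] assoc_mult_mat_vec[of _ k m _ n])
  also have "\<dots> = vec_times_mat x (A * B)"
    using vec_times_mat_eq_transpose[OF mult_carrier_mat[OF A B] x] by simp
  finally show ?thesis .
qed

lemma bij_betw_vec_times_mat:
  fixes A :: "'a::comm_semiring_1 mat"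
  assumes A: "A \<in> carrier_mat n n" and B: "B \<in> carrier_mat n n"
    and "A * B = 1\<^sub>m n" and "B * A = 1\<^sub>m n"
  shows "bij_betw (\<lambda>x. vec_times_mat x A) (carrier_vec n) (carrier_vec n)"
  by (rule bij_betw_byWitness[where f' = "\<lambda>y. vec_times_mat y B"])
    (use assms in \<open>auto simp: vec_times_mat_mult vec_times_mat_one vec_times_mat_carrier\<close>)

lemma array_row_vec_times_mat_minus:
  fixes A :: "'a::comm_ring mat"
  assumes "A \<in> carrier_mat s s" and "x \<in> carrier_vec s" and "y \<in> carrier_vec s" and "j < 2 * s"
  shows "array_row s (\<lambda>x. vec_times_mat x A) (x - y) j
    = array_row s (\<lambda>x. vec_times_mat x A) x j - array_row s (\<lambda>x. vec_times_mat x A) y j"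
  using assms vec_times_mat_carrier[OF assms(1), of x] vec_times_mat_carrier[OF assms(1), of y]
  by (auto simp: array_row_def vec_times_mat_minus)

lemma inj_on_restrict_array_row_iff:
  fixes A :: "'a::comm_ring mat"
  defines "phi \<equiv> \<lambda>x. vec_times_mat x A"
  assumes A: "A \<in> carrier_mat s s" and D: "D \<subseteq> {0..<2 * s}"
  shows "inj_on (\<lambda>x. restrict (array_row s phi x) D) (words s)
    \<longleftrightarrow> (\<forall>x \<in> carrier_vec s. (\<forall>j\<in>D. array_row s phi x j = 0) \<longrightarrow> x = 0\<^sub>v s)"
proof
  assume inj: "inj_on (\<lambda>x. restrict (array_row s phi x) D) (words s)"
  have zero: "array_row s phi (0\<^sub>v s) j = 0" if "j \<in> D" for j
  proof -
    have "j < 2 * s" using that D by auto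
    then show ?thesis using vec_times_mat_zero[OF A] unfolding phi_def array_row_def by simp
  qed
  show "\<forall>x \<in> carrier_vec s. (\<forall>j\<in>D. array_row s phi x j = 0) \<longrightarrow> x = 0\<^sub>v s"
  proof (intro ballI impI)
    fix x :: "'a vec" assume x: "x \<in> carrier_vec s" and "\<forall>j\<in>D. array_row s phi x j = 0"
    then have "restrict (array_row s phi x) D = restrict (array_row s phi (0\<^sub>v s)) D"
      by (intro restrict_ext) (simp add: zero)
    then show "x = 0\<^sub>v s"
      by (rule inj_onD[OF inj]) (use x in \<open>simp_all add: words_def\<close>)
  qed
next
  assume kernel: "\<forall>x \<in> carrier_vec s. (\<forall>j\<in>D. array_row s phi x j = 0) \<longrightarrow> x = 0\<^sub>v s"
  show "inj_on (\<lambda>x. restrict (array_row s phi x) D) (words s)"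
  proof (rule inj_onI)
    fix x y assume "x \<in> words s" and "y \<in> words s"
      and eq: "restrict (array_row s phi x) D = restrict (array_row s phi y) D"
    then have x: "x \<in> carrier_vec s" and y: "y \<in> carrier_vec s" by (simp_all add: words_def)
    have "array_row s phi (x - y) j = 0" if "j \<in> D" for j
    proof -
      have "j < 2 * s" using that D by auto
      moreover have "array_row s phi x j = array_row s phi y j"
        using fun_cong[OF eq, of j] that by simp
      ultimately show ?thesis
        using array_row_vec_times_mat_minus[OF A x y] unfolding phi_def by simp
    qed
    then have diff: "x - y = 0\<^sub>v s"
      using kernel x y by simp
    show "x = y"
    proof (rule eq_vecI)
      fix i assume i: "i < dim_vec y"
      then have "(x - y) $ i = 0" using diff y by simp
      then show "x $ i = y $ i" using i by simp
    qed (use x y in simp)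
  qed
qed

lemma unbiased_vec_times_mat_iff_kernel:
  fixes A :: "'a::{finite, comm_ring} mat"
  assumes A: "A \<in> carrier_mat s s" and I: "I \<subseteq> {0..<s}" and J: "J \<subseteq> {0..<s}"
    and card: "card I + card J = s"
  shows "unbiased s (\<lambda>x. vec_times_mat x A) (I \<union> (\<lambda>j. j + s) ` J)
    \<longleftrightarrow> (\<forall>x \<in> carrier_vec s. (\<forall>i\<in>I. x $ i = 0) \<and> (\<forall>j\<in>J. vec_times_mat x A $ j = 0)
          \<longrightarrow> x = 0\<^sub>v s)" (is "_ \<longleftrightarrow> ?kernel")
proof -
  let ?D = "I \<union> (\<lambda>j. j + s) ` J"
  have "finite I" "finite J" using I J finite_subset by auto
  moreover have "I \<inter> (\<lambda>j. j + s) ` J = {}" using I by auto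
  ultimately have "card ?D = s"
    using card by (simp add: card_Un_disjoint card_image)
  then have "unbiased s (\<lambda>x. vec_times_mat x A) ?D
      \<longleftrightarrow> inj_on (\<lambda>x. restrict (array_row s (\<lambda>x. vec_times_mat x A) x) ?D) (words s)"
    using \<open>finite I\<close> \<open>finite J\<close> by (intro unbiased_iff_inj_on) auto
  also have "\<dots> \<longleftrightarrow> (\<forall>x \<in> carrier_vec s.
      (\<forall>j\<in>?D. array_row s (\<lambda>x. vec_times_mat x A) x j = 0) \<longrightarrow> x = 0\<^sub>v s)"
    using I J by (intro inj_on_restrict_array_row_iff[OF A]) auto
  also have "\<dots> \<longleftrightarrow> ?kernel"
  proof -
    have "\<forall>i\<in>I. array_row s (\<lambda>x. vec_times_mat x A) x i = x $ i" for x
      using I by (auto simp: array_row_def)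
    moreover have "\<forall>j\<in>J. array_row s (\<lambda>x. vec_times_mat x A) x (j + s) = vec_times_mat x A $ j" for x
      by (simp add: array_row_def)
    ultimately show ?thesis by (simp add: ball_Un)
  qed
  finally show ?thesis .
qed

lemma card_less_in_set_less_card:
  fixes I :: "nat set"
  assumes "finite I" and "i \<in> I"
  shows "card {a\<in>I. a < i} < card I"
proof -
  have "{a\<in>I. a < i} \<subset> I"
  proof (rule psubsetI)
    show "{a\<in>I. a < i} \<noteq> I"
    proof
      assume "{a\<in>I. a < i} = I"
      then have "i \<in> {a\<in>I. a < i}" using assms(2) by simp
      then show False by simp
    qed
  qed auto
  then show ?thesis using assms(1) by (rule psubset_card_mono[rotated])
qed

lemma bij_betw_pick:
  assumes "finite I"
  shows "bij_betw (pick I) {0..<card I} I"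
  by (rule bij_betw_byWitness[where f' = "\<lambda>i. card {a\<in>I. a < i}"])
    (auto simp: card_pick pick_card_in_set card_less_in_set_less_card assms pick_in_set)

lemma ball_pick_iff:
  assumes "finite I"
  shows "(\<forall>i\<in>I. P i) \<longleftrightarrow> (\<forall>a < card I. P (pick I a))"
proof
  assume "\<forall>i\<in>I. P i"
  then show "\<forall>a < card I. P (pick I a)" by (simp add: pick_in_set)
next
  assume all_picks: "\<forall>a < card I. P (pick I a)"
  show "\<forall>i\<in>I. P i"
  proof
    fix i assume "i \<in> I"
    then have "P (pick I (card {a\<in>I. a < i}))"
      using all_picks card_less_in_set_less_card[OF assms] by blast
    then show "P i" using pick_card_in_set[OF \<open>i \<in> I\<close>] by simp
  qed
qed

definition subvec :: "'a vec \<Rightarrow> nat set \<Rightarrow> 'a vec" where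
  "subvec x I = vec (card I) (\<lambda>a. x $ pick I a)"

lemma submatrix_carrier_mat:
  assumes "A \<in> carrier_mat n m" and "I \<subseteq> {0..<n}" and "J \<subseteq> {0..<m}"
  shows "submatrix A I J \<in> carrier_mat (card I) (card J)"
proof -
  have "{i. i < n \<and> i \<in> I} = I" "{j. j < m \<and> j \<in> J} = J" using assms(2,3) by auto
  then show ?thesis using assms(1) dim_submatrix[of A I J] by auto
qed

lemma submatrix_index_subset:
  assumes "A \<in> carrier_mat n m" and "I \<subseteq> {0..<n}" and "J \<subseteq> {0..<m}"
    and "a < card I" and "b < card J"
  shows "submatrix A I J $$ (a, b) = A $$ (pick I a, pick J b)"
proof -
  have "{i. i < n \<and> i \<in> I} = I" "{j. j < m \<and> j \<in> J} = J" using assms(2,3) by auto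
  then have "a < card {i. i < dim_row A \<and> i \<in> I}" "b < card {j. j < dim_col A \<and> j \<in> J}"
    using assms(1,4,5) by simp_all
  then show ?thesis by (rule submatrix_index)
qed

lemma submatrix_atLeast0LessThan:
  assumes A: "A \<in> carrier_mat n m"
  shows "submatrix A {0..<n} {0..<m} = A"
proof -
  have pick_id: "pick {0..<k} a = a" if "a < k" for a k
  proof -
    have "{b \<in> {0..<k}. b < a} = {0..<a}" using that by auto
    then show ?thesis using pick_card_in_set[of a "{0..<k}"] that by simp
  qed
  show ?thesis
  proof (rule eq_matI)
    fix i j assume "i < dim_row A" "j < dim_col A"
    then show "submatrix A {0..<n} {0..<m} $$ (i, j) = A $$ (i, j)"
      using A by (simp add: submatrix_index_subset[OF A order_refl order_refl] pick_id)
  qed (use submatrix_carrier_mat[OF A order_refl order_refl] A in auto)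
qed

lemma vec_times_mat_pick_eq_subvec:
  fixes A :: "'a::comm_ring mat"
  assumes A: "A \<in> carrier_mat n m" and x: "x \<in> carrier_vec n"
    and I: "I \<subseteq> {0..<n}" and supp: "\<forall>i\<in>{0..<n} - I. x $ i = 0"
    and J: "J \<subseteq> {0..<m}" and b: "b < card J"
  shows "vec_times_mat x A $ pick J b = vec_times_mat (subvec x I) (submatrix A I J) $ b"
proof -
  have "finite I" "finite J" using I J finite_subset by auto
  have pick_J: "pick J b < m" using pick_in_set[of b J] b J by auto
  have "vec_times_mat x A $ pick J b = (\<Sum>i\<in>{0..<n}. x $ i * A $$ (i, pick J b))"
    using A x pick_J by (simp add: vec_times_mat_def scalar_prod_def)
  also have "\<dots> = (\<Sum>i\<in>I. x $ i * A $$ (i, pick J b))"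
    using I supp by (intro sum.mono_neutral_right) auto
  also have "\<dots> = (\<Sum>a\<in>{0..<card I}. x $ pick I a * A $$ (pick I a, pick J b))"
    by (rule sum.reindex_bij_betw[OF bij_betw_pick[OF \<open>finite I\<close>], symmetric])
  also have "\<dots> = (\<Sum>a\<in>{0..<card I}. subvec x I $ a * submatrix A I J $$ (a, b))"
    using b by (intro sum.cong) (simp_all add: subvec_def submatrix_index_subset[OF A I J])
  also have "\<dots> = vec_times_mat (subvec x I) (submatrix A I J) $ b"
    using submatrix_carrier_mat[OF A I J] b
    by (auto simp: vec_times_mat_def scalar_prod_def subvec_def intro!: sum.cong)
  finally show ?thesis .
qed

lemma subvec_carrier: "subvec x I \<in> carrier_vec (card I)"
  unfolding subvec_def by simp

lemma subvec_zero:
  assumes "I \<subseteq> {0..<n}"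
  shows "subvec (0\<^sub>v n) I = 0\<^sub>v (card I)"
proof (rule eq_vecI)
  fix a assume a: "a < dim_vec (0\<^sub>v (card I) :: 'a vec)"
  then have "pick I a \<in> I" by (simp add: pick_in_set)
  then show "subvec (0\<^sub>v n) I $ a = (0\<^sub>v (card I) :: 'a vec) $ a"
    using assms a by (auto simp: subvec_def)
qed (simp add: subvec_def)

lemma supported_vec_eq_0_if_subvec_eq_0:
  assumes x: "x \<in> carrier_vec n" and I: "I \<subseteq> {0..<n}"
    and supp: "\<forall>i\<in>{0..<n} - I. x $ i = 0" and sub: "subvec x I = 0\<^sub>v (card I)"
  shows "x = 0\<^sub>v n"
proof (rule eq_vecI)
  fix i assume "i < dim_vec (0\<^sub>v n :: 'a vec)"
  then have i: "i < n" by simp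
  show "x $ i = 0\<^sub>v n $ i"
  proof (cases "i \<in> I")
    case True
    let ?a = "card {a\<in>I. a < i}"
    have "finite I" using I finite_subset by auto
    then have "?a < card I" using True by (rule card_less_in_set_less_card)
    then have "x $ i = subvec x I $ ?a"
      using pick_card_in_set[OF True] by (simp add: subvec_def)
    then show ?thesis using sub i \<open>?a < card I\<close> by simp
  next
    case False
    then show ?thesis using supp i by simp
  qed
qed (use x in simp)

lemma ex_supported_vec_with_subvec:
  assumes I: "I \<subseteq> {0..<n}" and v: "v \<in> carrier_vec (card I)"
  shows "\<exists>x \<in> carrier_vec n. (\<forall>i\<in>{0..<n} - I. x $ i = 0) \<and> subvec x I = v"
proof -
  define x where "x = vec n (\<lambda>i. if i \<in> I then v $ card {a\<in>I. a < i} else 0)"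
  have "subvec x I = v"
  proof (rule eq_vecI)
    fix a assume "a < dim_vec v"
    then have a: "a < card I" using v by simp
    then have "pick I a \<in> I" by (simp add: pick_in_set)
    then show "subvec x I $ a = v $ a"
      using I a card_pick[of a I] by (auto simp: subvec_def x_def)
  qed (use v in \<open>simp add: subvec_def\<close>)
  moreover have "x \<in> carrier_vec n" "\<forall>i\<in>{0..<n} - I. x $ i = 0"
    by (auto simp: x_def)
  ultimately show ?thesis by blast
qed

lemma invertible_mat_iff_det:
  fixes S :: "'a::field mat"
  assumes S: "S \<in> carrier_mat k k"
  shows "invertible_mat S \<longleftrightarrow> det S \<noteq> 0"
proof
  assume "invertible_mat S"
  then obtain B where SB: "S * B = 1\<^sub>m k" and BS: "B * S = 1\<^sub>m (dim_row B)"
    using S unfolding invertible_mat_def inverts_mat_def by auto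
  have "dim_row B = k" using arg_cong[OF BS, of dim_col] S by simp
  moreover have "dim_col B = k" using arg_cong[OF SB, of dim_col] S by simp
  ultimately have B: "B \<in> carrier_mat k k" by auto
  have "det S * det B = 1" using arg_cong[OF SB, of det] det_mult[OF S B] by simp
  then show "det S \<noteq> 0" by auto
next
  assume "det S \<noteq> 0"
  from det_non_zero_imp_unit[OF S this]
  obtain B where "B \<in> carrier_mat k k" and "B * S = 1\<^sub>m k" and "S * B = 1\<^sub>m k"
    unfolding Units_def ring_mat_def by auto
  then show "invertible_mat S"
    using S unfolding invertible_mat_def inverts_mat_def square_mat.simps
    by (intro conjI exI[of _ B]) auto
qed

lemma invertible_mat_iff_vec_times_mat_eq_0:
  fixes S :: "'a::field mat"
  assumes S: "S \<in> carrier_mat k k"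
  shows "invertible_mat S \<longleftrightarrow> (\<forall>v \<in> carrier_vec k. vec_times_mat v S = 0\<^sub>v k \<longrightarrow> v = 0\<^sub>v k)"
proof -
  have "invertible_mat S \<longleftrightarrow> det (transpose_mat S) \<noteq> 0"
    using invertible_mat_iff_det[OF S] det_transpose[OF S] by simp
  also have "\<dots> \<longleftrightarrow> \<not> (\<exists>v. v \<in> carrier_vec k \<and> v \<noteq> 0\<^sub>v k \<and> transpose_mat S *\<^sub>v v = 0\<^sub>v k)"
    using det_0_iff_vec_prod_zero[of "transpose_mat S" k] S by auto
  also have "\<dots> \<longleftrightarrow> (\<forall>v \<in> carrier_vec k. vec_times_mat v S = 0\<^sub>v k \<longrightarrow> v = 0\<^sub>v k)"
    by (auto simp: vec_times_mat_eq_transpose[OF S])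
  finally show ?thesis .
qed

lemma invertible_mat_dim_0:
  fixes S :: "'a::field mat"
  assumes S: "S \<in> carrier_mat 0 0"
  shows "invertible_mat S"
  unfolding invertible_mat_iff_vec_times_mat_eq_0[OF S]
  by (intro ballI impI eq_vecI) simp_all

lemma invertible_submatrix_iff_kernel:
  fixes A :: "'a::field mat"
  assumes A: "A \<in> carrier_mat n m" and I: "I \<subseteq> {0..<n}" and J: "J \<subseteq> {0..<m}"
    and card: "card I = card J"
  shows "invertible_mat (submatrix A I J) \<longleftrightarrow>
    (\<forall>x \<in> carrier_vec n. (\<forall>i\<in>{0..<n} - I. x $ i = 0) \<and> (\<forall>j\<in>J. vec_times_mat x A $ j = 0)
       \<longrightarrow> x = 0\<^sub>v n)" (is "_ \<longleftrightarrow> ?kernel")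
proof -
  let ?S = "submatrix A I J"
  have S: "?S \<in> carrier_mat (card I) (card I)"
    using submatrix_carrier_mat[OF A I J] card by simp
  have "finite J" using J finite_subset by auto
  have vanishes_on_J:
    "(\<forall>j\<in>J. vec_times_mat x A $ j = 0) \<longleftrightarrow> vec_times_mat (subvec x I) ?S = 0\<^sub>v (card I)"
    if x: "x \<in> carrier_vec n" and supp: "\<forall>i\<in>{0..<n} - I. x $ i = 0" for x
  proof -
    have "(\<forall>j\<in>J. vec_times_mat x A $ j = 0) \<longleftrightarrow> (\<forall>b < card J. vec_times_mat x A $ pick J b = 0)"
      by (rule ball_pick_iff[OF \<open>finite J\<close>])
    also have "\<dots> \<longleftrightarrow> (\<forall>b < card I. vec_times_mat (subvec x I) ?S $ b = 0)"
      using vec_times_mat_pick_eq_subvec[OF A x I supp J] card by simp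
    also have "\<dots> \<longleftrightarrow> vec_times_mat (subvec x I) ?S = 0\<^sub>v (card I)"
      using vec_times_mat_carrier[OF S] by (auto simp: vec_eq_iff)
    finally show ?thesis .
  qed
  show ?thesis
  proof
    assume inv: "invertible_mat ?S"
    show ?kernel
    proof (intro ballI impI)
      fix x assume x: "x \<in> carrier_vec n"
        and zeros: "(\<forall>i\<in>{0..<n} - I. x $ i = 0) \<and> (\<forall>j\<in>J. vec_times_mat x A $ j = 0)"
      then have "vec_times_mat (subvec x I) ?S = 0\<^sub>v (card I)"
        using vanishes_on_J by blast
      then have "subvec x I = 0\<^sub>v (card I)"
        using inv invertible_mat_iff_vec_times_mat_eq_0[OF S] subvec_carrier by blast
      then show "x = 0\<^sub>v n"
        using supported_vec_eq_0_if_subvec_eq_0[OF x I] zeros by blast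
    qed
  next
    assume kernel: ?kernel
    show "invertible_mat ?S"
      unfolding invertible_mat_iff_vec_times_mat_eq_0[OF S]
    proof (intro ballI impI)
      fix v assume v: "v \<in> carrier_vec (card I)" and vS: "vec_times_mat v ?S = 0\<^sub>v (card I)"
      obtain x where x: "x \<in> carrier_vec n" and supp: "\<forall>i\<in>{0..<n} - I. x $ i = 0"
        and sub: "subvec x I = v"
        using ex_supported_vec_with_subvec[OF I v] by blast
      have "x = 0\<^sub>v n" using kernel x supp vanishes_on_J[OF x supp] vS sub by blast
      then have "v = subvec (0\<^sub>v n) I" using sub by simp
      then show "v = 0\<^sub>v (card I)" using subvec_zero[OF I] by simp
    qed
  qed
qed

lemma unbiased_vec_times_mat_iff_invertible_submatrix:
  fixes A :: "'a::{finite, field} mat"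
  assumes A: "A \<in> carrier_mat s s" and I: "I \<subseteq> {0..<s}" and J: "J \<subseteq> {0..<s}"
    and card: "card I = card J"
  shows "unbiased s (\<lambda>x. vec_times_mat x A) (({0..<s} - I) \<union> (\<lambda>j. j + s) ` J)
    \<longleftrightarrow> invertible_mat (submatrix A I J)"
proof -
  have "card I \<le> s" using card_mono[OF _ I] by simp
  then have "card ({0..<s} - I) + card J = s"
    using card card_Diff_subset[OF finite_subset[OF I] I] by simp
  then have "unbiased s (\<lambda>x. vec_times_mat x A) (({0..<s} - I) \<union> (\<lambda>j. j + s) ` J) \<longleftrightarrow>
      (\<forall>x \<in> carrier_vec s. (\<forall>i\<in>{0..<s} - I. x $ i = 0) \<and> (\<forall>j\<in>J. vec_times_mat x A $ j = 0)
         \<longrightarrow> x = 0\<^sub>v s)"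
    by (intro unbiased_vec_times_mat_iff_kernel[OF A _ J]) auto
  also have "\<dots> \<longleftrightarrow> invertible_mat (submatrix A I J)"
    by (rule invertible_submatrix_iff_kernel[OF A I J card, symmetric])
  finally show ?thesis .
qed

lemma all_index_sets_shift_iff:
  assumes "t \<le> s"
  shows "(\<forall>I J. I \<subseteq> {0..<s} \<longrightarrow> card I = t \<longrightarrow> J \<subseteq> {s..<2 * s} \<longrightarrow> card J = s - t
            \<longrightarrow> P I J) \<longleftrightarrow>
         (\<forall>I J. I \<subseteq> {0..<s} \<longrightarrow> J \<subseteq> {0..<s} \<longrightarrow> card I = s - t \<longrightarrow> card J = s - t
            \<longrightarrow> P ({0..<s} - I) ((\<lambda>j. j + s) ` J))"
proof
  assume H: "\<forall>I J. I \<subseteq> {0..<s} \<longrightarrow> card I = t \<longrightarrow> J \<subseteq> {s..<2 * s} \<longrightarrow> card J = s - t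
               \<longrightarrow> P I J"
  show "\<forall>I J. I \<subseteq> {0..<s} \<longrightarrow> J \<subseteq> {0..<s} \<longrightarrow> card I = s - t \<longrightarrow> card J = s - t
          \<longrightarrow> P ({0..<s} - I) ((\<lambda>j. j + s) ` J)"
  proof (intro allI impI)
    fix I J assume I: "I \<subseteq> {0..<s}" and J: "J \<subseteq> {0..<s}"
      and cI: "card I = s - t" and cJ: "card J = s - t"
    have "card ({0..<s} - I) = t"
      using card_Diff_subset[OF finite_subset[OF I] I] cI assms by simp
    moreover have "card ((\<lambda>j. j + s) ` J) = s - t"
      using cJ by (simp add: card_image)
    moreover have "(\<lambda>j. j + s) ` J \<subseteq> {s..<2 * s}"
      using J by auto
    ultimately show "P ({0..<s} - I) ((\<lambda>j. j + s) ` J)"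
      by (intro H[rule_format] Diff_subset)
  qed
next
  assume H: "\<forall>I J. I \<subseteq> {0..<s} \<longrightarrow> J \<subseteq> {0..<s} \<longrightarrow> card I = s - t \<longrightarrow> card J = s - t
               \<longrightarrow> P ({0..<s} - I) ((\<lambda>j. j + s) ` J)"
  show "\<forall>I J. I \<subseteq> {0..<s} \<longrightarrow> card I = t \<longrightarrow> J \<subseteq> {s..<2 * s} \<longrightarrow> card J = s - t
          \<longrightarrow> P I J"
  proof (intro allI impI)
    fix I J assume I: "I \<subseteq> {0..<s}" and cI: "card I = t"
      and J: "J \<subseteq> {s..<2 * s}" and cJ: "card J = s - t"
    let ?I = "{0..<s} - I" and ?J = "(\<lambda>j. j - s) ` J"
    have card_I: "card ?I = s - t"
      using card_Diff_subset[OF finite_subset[OF I] I] cI by simp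
    have "inj_on (\<lambda>j. j - s) J"
    proof (rule inj_onI)
      fix x y assume "x \<in> J" "y \<in> J" "x - s = y - s"
      moreover have "s \<le> x" "s \<le> y" using J \<open>x \<in> J\<close> \<open>y \<in> J\<close> by auto
      ultimately show "x = y" by arith
    qed
    then have card_J: "card ?J = s - t"
      using cJ by (simp add: card_image)
    have "j - s < s" if "j \<in> J" for j
      using J that by (auto simp: subset_iff)
    then have "?J \<subseteq> {0..<s}" by auto
    then have "P ({0..<s} - ?I) ((\<lambda>j. j + s) ` ?J)"
      using card_I card_J by (intro H[rule_format] Diff_subset)
    moreover have "{0..<s} - ?I = I"
      using I by auto
    moreover have "(\<lambda>j. j + s) ` ?J = J"
    proof -
      have "(\<lambda>j. j + s) ` ?J = (\<lambda>j. j - s + s) ` J" by (simp add: image_image)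
      also have "\<dots> = id ` J" by (rule image_cong) (use J in auto)
      finally show ?thesis by simp
    qed
    ultimately show "P I J" by simp
  qed
qed

theorem mainTheorem6:
  fixes M Minv :: "'a :: {finite, field} mat" and s t :: nat
  assumes "1 \<le> t" and "t \<le> s"
    and "M \<in> carrier_mat s s" and "invertible_mat M"
    and "Minv \<in> carrier_mat s s" and "M * Minv = 1\<^sub>m s" and "Minv * M = 1\<^sub>m s"
  shows "AONT t s (\<lambda>x. vec_times_mat x Minv) \<longleftrightarrow>
           (\<forall>I J. I \<subseteq> {0..<s} \<longrightarrow> J \<subseteq> {0..<s} \<longrightarrow> card I = s - t \<longrightarrow> card J = s - t
              \<longrightarrow> invertible_mat (submatrix Minv I J))"
proof -
  let ?phi = "\<lambda>x. vec_times_mat x Minv"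
  have crit: "unbiased s ?phi (({0..<s} - I) \<union> (\<lambda>j. j + s) ` J)
      \<longleftrightarrow> invertible_mat (submatrix Minv I J)"
    if "I \<subseteq> {0..<s}" and "J \<subseteq> {0..<s}" and "card I = card J" for I J
    using unbiased_vec_times_mat_iff_invertible_submatrix[OF assms(5) that] .
  have "bij_betw ?phi (words s) (words s)"
    unfolding words_def using assms(5,3,7,6) by (rule bij_betw_vec_times_mat)
  moreover have "unbiased s ?phi {0..<s}"
  proof -
    have "submatrix Minv {} {} \<in> carrier_mat 0 0"
      using submatrix_carrier_mat[OF assms(5), of "{}" "{}"] by simp
    then show ?thesis using crit[of "{}" "{}"] invertible_mat_dim_0 by simp
  qed
  moreover have "unbiased s ?phi {s..<2 * s}"
  proof -
    have "invertible_mat Minv"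
      unfolding invertible_mat_def inverts_mat_def
      by (intro conjI exI[of _ M]) (use assms(3,5-7) in auto)
    then show ?thesis
      using crit[of "{0..<s}" "{0..<s}"] submatrix_atLeast0LessThan[OF assms(5)] by (simp add: mult_2)
  qed
  moreover have "(\<forall>I J. I \<subseteq> {0..<s} \<longrightarrow> card I = t \<longrightarrow> J \<subseteq> {s..<2 * s} \<longrightarrow> card J = s - t
        \<longrightarrow> unbiased s ?phi (I \<union> J)) \<longleftrightarrow>
      (\<forall>I J. I \<subseteq> {0..<s} \<longrightarrow> J \<subseteq> {0..<s} \<longrightarrow> card I = s - t \<longrightarrow> card J = s - t
        \<longrightarrow> invertible_mat (submatrix Minv I J))"
    unfolding all_index_sets_shift_iff[OF assms(2)] by (simp add: crit cong: imp_cong)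
  ultimately show ?thesis
    unfolding AONT_def by blast
qed

end
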